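(* Let $0<\varpi<2$, $0\le\beta_e\le1$ and $\epsilon>0$. Let $X$ be binary with distribution $(p,1-p)$, $p\in[0,1/2]$, and $Y$ the output of the binary erasure channel $p(y\mid x)=\begin{pmatrix}1-\beta_e&0&\beta_e\\ 0&1-\beta_e&\beta_e\end{pmatrix}$. Consider $$\max_{p\in[0,1/2]} I(X;Y)\quad\text{subject to}\quad L(\varpi,X)-L(\varpi,X\mid Y)\le\epsilon.$$ Let $C_{\beta_e}=(1-\beta_e)(e^{\varpi/2}-1)$. Then the optimal value equals $1-\beta_e$ if $\epsilon\ge C_{\beta_e}$, and equals $(1-\beta_e)H(p_e)$ if $0<\epsilon\le C_{\beta_e}$, where $p_e\in[0,1/2]$ is the solution of $(1-\beta_e)\big(pe^{\varpi(1-p)}+(1-p)e^{\varpi p}-1\big)=\epsilon$.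
   Context: MIM: $L(\varpi,X)=\sum_i p(x_i)e^{\varpi(1-p(x_i))}$. CMIM: $L(\varpi,X\mid Y)=\sum_{j:\,p(y_j)>0}p(y_j)\sum_i p(x_i\mid y_j)e^{\varpi(1-p(x_i\mid y_j))}$, where the joint law is $p(x_i)p(y_j\mid x_i)$ and $p(x_i\mid y_j)=p(x_i)p(y_j\mid x_i)/p(y_j)$. $I(X;Y)$ denotes mutual information in bits, and $H(q)=-q\log_2 q-(1-q)\log_2(1-q)$ is the binary entropy function. *)

theory Defs
  imports Complex_Main
begin

text \<open>Generic finite-alphabet notions. An input law is px on a finite alphabet A,
a channel is W x y = p(y|x) with output alphabet B.\<close>

definition out_prob :: "('x \<Rightarrow> real) \<Rightarrow> ('x \<Rightarrow> 'y \<Rightarrow> real) \<Rightarrow> 'x set \<Rightarrow> 'y \<Rightarrow> real" where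
  "out_prob px W A y = (\<Sum>x\<in>A. px x * W x y)"

definition MIM :: "real \<Rightarrow> ('x \<Rightarrow> real) \<Rightarrow> 'x set \<Rightarrow> real" where
  "MIM w px A = (\<Sum>x\<in>A. px x * exp (w * (1 - px x)))"

definition CMIM :: "real \<Rightarrow> ('x \<Rightarrow> real) \<Rightarrow> ('x \<Rightarrow> 'y \<Rightarrow> real) \<Rightarrow> 'x set \<Rightarrow> 'y set \<Rightarrow> real" where
  "CMIM w px W A B =
     (\<Sum>y\<in>{y\<in>B. out_prob px W A y > 0}.
        out_prob px W A y *
        (\<Sum>x\<in>A. (px x * W x y / out_prob px W A y) *
                  exp (w * (1 - px x * W x y / out_prob px W A y))))"

definition mutual_info :: "('x \<Rightarrow> real) \<Rightarrow> ('x \<Rightarrow> 'y \<Rightarrow> real) \<Rightarrow> 'x set \<Rightarrow> 'y set \<Rightarrow> real" where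
  "mutual_info px W A B =
     (\<Sum>x\<in>A. \<Sum>y\<in>B. if px x * W x y > 0
        then px x * W x y * log 2 (px x * W x y / (px x * out_prob px W A y)) else 0)"

definition xlog2 :: "real \<Rightarrow> real" where
  "xlog2 q = (if q = 0 then 0 else q * log 2 q)"

definition bin_entropy :: "real \<Rightarrow> real" where
  "bin_entropy q = - xlog2 q - xlog2 (1 - q)"

text \<open>Binary input X in {0,1} with P(X=0) = p, and binary erasure channel with
outputs {0,1,2}, 2 being the erasure symbol.\<close>
definition bin_law :: "real \<Rightarrow> nat \<Rightarrow> real" where
  "bin_law p x = (if x = 0 then p else 1 - p)"

definition bec :: "real \<Rightarrow> nat \<Rightarrow> nat \<Rightarrow> real" where
  "bec b x y = (if y = 2 then b else if y = x then 1 - b else 0)"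

definition is_max_value :: "('a \<Rightarrow> real) \<Rightarrow> 'a set \<Rightarrow> real \<Rightarrow> bool" where
  "is_max_value f S v \<longleftrightarrow> (\<exists>s\<in>S. f s = v) \<and> (\<forall>s\<in>S. f s \<le> v)"

end

theory Submission
  imports Defs
begin

text \<open>On the erasure channel the posterior of X is a point mass after an unerased output and
equals the prior after an erasure, so L(w,X|Y) = (1 - b) + b L(w,X), the constraint becomes
(1 - b) (L(w,X) - 1) <= eps, and I(X;Y) = (1 - b) H(p). On [0,1/2] both
L(w,X) - 1 = p exp(w(1-p)) + (1-p) exp(wp) - 1 and H are increasing, the former because the
derivative (1 - wt) exp(w(1-t)) of t exp(w(1-t)) decreases on [0,1] when w <= 2. Hence the
feasible set is an interval [0,p*] and the optimum is attained at p* = 1/2 if eps >= C and at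
p* = p_e otherwise.\<close>

lemma is_max_value_mono_on:
  fixes S :: "'a::preorder set"
  assumes "mono_on S f" "t \<in> S"
  shows "is_max_value f {x \<in> S. x \<le> t} (f t)"
  unfolding is_max_value_def
proof
  show "\<exists>s\<in>{x \<in> S. x \<le> t}. f s = f t"
    using assms(2) by (intro bexI[of _ t]) auto
  show "\<forall>s\<in>{x \<in> S. x \<le> t}. f s \<le> f t"
    using assms by (auto intro: mono_onD)
qed

lemma sum_0_1_2: "(\<Sum>y\<in>{0, 1, 2::nat}. f y) = f 0 + f 1 + f 2"
  by (simp add: add.assoc)

lemma xlog2_nonpos: "0 \<le> x \<Longrightarrow> x \<le> 1 \<Longrightarrow> xlog2 x \<le> 0"
  by (auto simp: xlog2_def mult_nonneg_nonpos)

lemma bin_entropy_nonneg: "0 \<le> x \<Longrightarrow> x \<le> 1 \<Longrightarrow> 0 \<le> bin_entropy x"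
  using xlog2_nonpos[of x] xlog2_nonpos[of "1 - x"] by (simp add: bin_entropy_def)

lemma bin_entropy_half: "bin_entropy (1/2) = 1"
  by (simp add: bin_entropy_def xlog2_def log_divide)

lemma bin_entropy_deriv:
  assumes "0 < x" "x < 1"
  shows "DERIV bin_entropy x :> log 2 (1 - x) - log 2 x"
proof (rule has_field_derivative_transform_within_open)
  have "DERIV (\<lambda>t. - (t * log 2 t) - (1 - t) * log 2 (1 - t)) x :>
          - (1 * log 2 x + x * (1 / (ln 2 * x))) - ((- 1) * log 2 (1 - x) + (1 - x) * ((- 1) / (ln 2 * (1 - x))))"
    using assms by (auto intro!: derivative_eq_intros)
  moreover have "- (1 * log 2 x + x * (1 / (ln 2 * x))) - ((- 1) * log 2 (1 - x) + (1 - x) * ((- 1) / (ln 2 * (1 - x))))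
      = log 2 (1 - x) - log 2 x"
    using assms by (simp add: field_simps)
  ultimately show "DERIV (\<lambda>t. - (t * log 2 t) - (1 - t) * log 2 (1 - t)) x :> log 2 (1 - x) - log 2 x"
    by simp
  show "- (t * log 2 t) - (1 - t) * log 2 (1 - t) = bin_entropy t" if "t \<in> {0<..<1}" for t
    using that by (simp add: bin_entropy_def xlog2_def)
qed (use assms in auto)

lemma bin_entropy_mono: "mono_on {0..1/2} bin_entropy"
proof (rule mono_onI)
  fix p q :: real assume pq: "p \<in> {0..1/2}" "q \<in> {0..1/2}" "p \<le> q"
  show "bin_entropy p \<le> bin_entropy q"
  proof (cases "p = 0")
    case True
    with pq show ?thesis
      using bin_entropy_nonneg[of q] by (simp add: bin_entropy_def xlog2_def)
  next
    case False
    with pq have deriv: "DERIV bin_entropy x :> log 2 (1 - x) - log 2 x" if "x \<in> {p..q}" for x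
      using that by (intro bin_entropy_deriv) auto
    show ?thesis
    proof (rule DERIV_nonneg_imp_increasing_open[OF \<open>p \<le> q\<close>])
      fix x assume "p < x" "x < q"
      with pq False show "\<exists>y. DERIV bin_entropy x :> y \<and> 0 \<le> y"
        using deriv by (intro exI[of _ "log 2 (1 - x) - log 2 x"]) auto
    next
      show "continuous_on {p..q} bin_entropy"
        using deriv by (meson DERIV_isCont continuous_at_imp_continuous_on)
    qed
  qed
qed

definition mim_gap :: "real \<Rightarrow> real \<Rightarrow> real" where
  "mim_gap w p = p * exp (w * (1 - p)) + (1 - p) * exp (w * p) - 1"

lemma mim_gap_strict_mono:
  assumes "0 < w" "w \<le> 2"
  shows "strict_mono_on {0..1/2} (mim_gap w)"
proof -
  define d where "d t = (1 - w * t) * exp (w * (1 - t))" for t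
  have d_deriv: "DERIV d t :> - w * exp (w * (1 - t)) * (2 - w * t)" for t
    unfolding d_def by (auto intro!: derivative_eq_intros simp: algebra_simps)
  have d_decreasing: "d t < d s" if "0 \<le> s" "s < t" "t \<le> 1" for s t
  proof (rule DERIV_neg_imp_decreasing_open[OF \<open>s < t\<close>])
    fix x assume "s < x" "x < t"
    with that assms have "w * x < w * 1"
      by (intro mult_strict_left_mono) auto
    with assms have "0 < 2 - w * x"
      by linarith
    with assms d_deriv show "\<exists>y. DERIV d x :> y \<and> y < 0"
      by (intro exI[of _ "- w * exp (w * (1 - x)) * (2 - w * x)"]) (simp add: mult_pos_pos)
  next
    show "continuous_on {s..t} d"
      using d_deriv by (meson DERIV_isCont continuous_at_imp_continuous_on)
  qed
  have gap_deriv: "DERIV (mim_gap w) x :> d x - d (1 - x)" for x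
    unfolding mim_gap_def d_def by (auto intro!: derivative_eq_intros simp: algebra_simps)
  show ?thesis
  proof (rule strict_mono_onI)
    fix p q :: real assume pq: "p \<in> {0..1/2}" "q \<in> {0..1/2}" "p < q"
    show "mim_gap w p < mim_gap w q"
    proof (rule DERIV_pos_imp_increasing_open[OF \<open>p < q\<close>])
      fix x assume "p < x" "x < q"
      with pq have "d (1 - x) < d x"
        by (intro d_decreasing) auto
      with gap_deriv show "\<exists>y. DERIV (mim_gap w) x :> y \<and> y > 0"
        by (intro exI[of _ "d x - d (1 - x)"]) auto
    next
      show "continuous_on {p..q} (mim_gap w)"
        using gap_deriv by (meson DERIV_isCont continuous_at_imp_continuous_on)
    qed
  qed
qed

lemma mim_gap_le_half:
  assumes "0 < w" "w \<le> 2" "p \<in> {0..1/2}"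
  shows "mim_gap w p \<le> exp (w / 2) - 1"
  using strict_mono_on_leD[OF mim_gap_strict_mono[OF assms(1,2)] assms(3), of "1/2"] assms(3)
  by (simp add: mim_gap_def)

lemma mim_gap_attains:
  assumes "0 \<le> c" "0 \<le> y" "y \<le> c * mim_gap w (1/2)"
  shows "\<exists>p\<in>{0..1/2}. c * mim_gap w p = y"
proof -
  have "\<exists>p. 0 \<le> p \<and> p \<le> 1/2 \<and> c * mim_gap w p = y"
  proof (rule IVT)
    show "c * mim_gap w 0 \<le> y"
      using assms by (simp add: mim_gap_def)
    show "\<forall>p. 0 \<le> p \<and> p \<le> 1/2 \<longrightarrow> isCont (\<lambda>p. c * mim_gap w p) p"
      by (simp add: mim_gap_def)
  qed (use assms in simp_all)
  then show ?thesis
    by auto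
qed

lemma out_prob_bin_law_bec:
  "out_prob (bin_law p) (bec b) {0, 1} 0 = p * (1 - b)"
  "out_prob (bin_law p) (bec b) {0, 1} 1 = (1 - p) * (1 - b)"
  "out_prob (bin_law p) (bec b) {0, 1} 2 = b"
  by (simp_all add: out_prob_def bin_law_def bec_def algebra_simps)

lemma MIM_bin_law: "MIM w (bin_law p) {0, 1} = mim_gap w p + 1"
  by (simp add: MIM_def bin_law_def mim_gap_def)

lemma CMIM_bin_law_bec:
  assumes "0 \<le> p" "p \<le> 1" "0 \<le> b" "b \<le> 1"
  shows "CMIM w (bin_law p) (bec b) {0, 1} {0, 1, 2} = (1 - b) + b * MIM w (bin_law p) {0, 1}"
proof -
  let ?o = "out_prob (bin_law p) (bec b) {0, 1}"
  define T where "T y = (if 0 < ?o y then ?o y * (\<Sum>x\<in>{0, 1}. (bin_law p x * bec b x y / ?o y) *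
                         exp (w * (1 - bin_law p x * bec b x y / ?o y))) else 0)" for y
  have "CMIM w (bin_law p) (bec b) {0, 1} {0, 1, 2} = (\<Sum>y\<in>{0, 1, 2}. T y)"
    unfolding CMIM_def T_def by (rule sum.inter_filter) simp
  moreover have "T 0 = p * (1 - b)" "T 1 = (1 - p) * (1 - b)"
    unfolding T_def out_prob_bin_law_bec using assms
    by (auto simp: bin_law_def bec_def zero_less_mult_iff)
  moreover have "T 2 = b * MIM w (bin_law p) {0, 1}"
    unfolding T_def out_prob_bin_law_bec using assms
    by (auto simp: MIM_def bin_law_def bec_def algebra_simps)
  ultimately show ?thesis
    unfolding sum_0_1_2 by (simp add: algebra_simps)
qed

lemma MIM_minus_CMIM_bin_law_bec:
  assumes "0 \<le> p" "p \<le> 1" "0 \<le> b" "b \<le> 1"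
  shows "MIM w (bin_law p) {0, 1} - CMIM w (bin_law p) (bec b) {0, 1} {0, 1, 2} = (1 - b) * mim_gap w p"
  using CMIM_bin_law_bec[OF assms, of w] unfolding MIM_bin_law by (simp add: algebra_simps)

lemma mutual_info_bin_law_bec:
  assumes "0 \<le> p" "p \<le> 1" "0 \<le> b" "b \<le> 1"
  shows "mutual_info (bin_law p) (bec b) {0, 1} {0, 1, 2} = (1 - b) * bin_entropy p"
proof -
  have unerased: "(if 0 < q * c then q * c * log 2 (q * c / (q * (q * c))) else 0) = - c * xlog2 q"
    if "0 \<le> q" "0 \<le> c" for q c :: real
    using that by (auto simp: xlog2_def zero_less_mult_iff log_divide algebra_simps)
  have sum_two: "(\<Sum>x\<in>{0, 1}. f x) = f 0 + f (1::nat)" for f :: "nat \<Rightarrow> real"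
    by simp
  have law: "bin_law p 0 = p" "bin_law p 1 = 1 - p"
    by (simp_all add: bin_law_def)
  have channel: "bec b 0 0 = 1 - b" "bec b 0 1 = 0" "bec b 0 2 = b"
    "bec b 1 0 = 0" "bec b 1 1 = 1 - b" "bec b 1 2 = b"
    by (simp_all add: bec_def)
  have "0 \<le> 1 - p" "0 \<le> 1 - b"
    using assms by simp_all
  then show ?thesis
    unfolding mutual_info_def sum_two sum_0_1_2 out_prob_bin_law_bec law channel
      unerased[OF assms(1) \<open>0 \<le> 1 - b\<close>] unerased[OF \<open>0 \<le> 1 - p\<close> \<open>0 \<le> 1 - b\<close>]
    by (simp add: bin_entropy_def algebra_simps)
qed

lemma mutual_info_bin_law_bec_mono:
  assumes "0 \<le> b" "b \<le> 1"
  shows "mono_on {0..1/2} (\<lambda>p. mutual_info (bin_law p) (bec b) {0, 1} {0, 1, 2})"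
proof (rule mono_onI)
  fix p q :: real assume pq: "p \<in> {0..1/2}" "q \<in> {0..1/2}" "p \<le> q"
  with assms have "(1 - b) * bin_entropy p \<le> (1 - b) * bin_entropy q"
    by (intro mult_left_mono mono_onD[OF bin_entropy_mono]) auto
  with pq assms show "mutual_info (bin_law p) (bec b) {0, 1} {0, 1, 2} \<le> mutual_info (bin_law q) (bec b) {0, 1} {0, 1, 2}"
    by (subst (1 2) mutual_info_bin_law_bec) auto
qed

theorem proposition6:
  fixes w b \<epsilon> :: real
  assumes "0 < w" "w < 2" "0 \<le> b" "b \<le> 1" "0 < \<epsilon>"
  defines "I \<equiv> (\<lambda>p. mutual_info (bin_law p) (bec b) {0, 1} {0, 1, 2})"
    and "F \<equiv> {p \<in> {0..1/2}.
               MIM w (bin_law p) {0, 1} - CMIM w (bin_law p) (bec b) {0, 1} {0, 1, 2} \<le> \<epsilon>}"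
    and "C \<equiv> (1 - b) * (exp (w / 2) - 1)"
  shows "(\<epsilon> \<ge> C \<longrightarrow> is_max_value I F (1 - b)) \<and>
         (\<epsilon> \<le> C \<longrightarrow>
            (\<exists>pe\<in>{0..1/2}. (1 - b) * (pe * exp (w * (1 - pe)) + (1 - pe) * exp (w * pe) - 1) = \<epsilon>) \<and>
            (\<forall>pe\<in>{0..1/2}. (1 - b) * (pe * exp (w * (1 - pe)) + (1 - pe) * exp (w * pe) - 1) = \<epsilon> \<longrightarrow>
               is_max_value I F ((1 - b) * bin_entropy pe)))"
proof -
  let ?loss = "\<lambda>p. (1 - b) * mim_gap w p"
  have I_eq: "I p = (1 - b) * bin_entropy p" if "p \<in> {0..1/2}" for p
    unfolding I_def using that assms(3,4) by (intro mutual_info_bin_law_bec) auto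
  have I_mono: "mono_on {0..1/2} I"
    unfolding I_def using assms(3,4) by (intro mutual_info_bin_law_bec_mono)
  have F_eq: "F = {p \<in> {0..1/2}. ?loss p \<le> \<epsilon>}"
    unfolding F_def using assms(3,4) \<comment> \<open>not simp: it rewrites 1::nat to Suc 0 before the lemma can match\<close>
    by (intro Collect_cong conj_cong refl; subst MIM_minus_CMIM_bin_law_bec) auto
  show ?thesis
  proof (intro conjI impI)
    assume "C \<le> \<epsilon>"
    have "?loss p \<le> C" if "p \<in> {0..1/2}" for p
      using mim_gap_le_half[OF _ _ that] assms(1-4) by (simp add: C_def mult_left_mono)
    with \<open>C \<le> \<epsilon>\<close> have "F = {p \<in> {0..1/2}. p \<le> 1/2}"
      by (force simp: F_eq)
    then show "is_max_value I F (1 - b)"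
      using is_max_value_mono_on[OF I_mono, of "1/2"] I_eq[of "1/2"] bin_entropy_half by simp
  next
    assume "\<epsilon> \<le> C"
    with assms(3-5) show "\<exists>pe\<in>{0..1/2}. (1 - b) * (pe * exp (w * (1 - pe)) + (1 - pe) * exp (w * pe) - 1) = \<epsilon>"
      using mim_gap_attains[of "1 - b" \<epsilon> w] by (simp add: C_def mim_gap_def)
    from \<open>\<epsilon> \<le> C\<close> assms(4,5) have "b < 1"
      by (cases "b = 1") (auto simp: C_def)
    have gap_mono: "strict_mono_on {0..1/2} (mim_gap w)"
      using assms(1,2) by (intro mim_gap_strict_mono) auto
    show "\<forall>pe\<in>{0..1/2}. (1 - b) * (pe * exp (w * (1 - pe)) + (1 - pe) * exp (w * pe) - 1) = \<epsilon> \<longrightarrow>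
            is_max_value I F ((1 - b) * bin_entropy pe)"
    proof (intro ballI impI)
      fix pe assume pe: "pe \<in> {0..1/2}"
        "(1 - b) * (pe * exp (w * (1 - pe)) + (1 - pe) * exp (w * pe) - 1) = \<epsilon>"
      with \<open>b < 1\<close> have "F = {p \<in> {0..1/2}. p \<le> pe}"
        using strict_mono_on_less_eq[OF gap_mono _ pe(1)] by (auto simp: F_eq mim_gap_def)
      then show "is_max_value I F ((1 - b) * bin_entropy pe)"
        using is_max_value_mono_on[OF I_mono pe(1)] I_eq[OF pe(1)] by simp
    qed
  qed
qed

end
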